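(* Let $n\ge2$, let $\Theta$ be a positive random variable with density and Laplace transform $f_\Theta^\star(s)=E[e^{-s\Theta}]$ satisfying $\int_0^\infty f_\Theta^\star(x)dx<\infty$, let $Z_1,\dots,Z_n$ be i.i.d. standard exponential and independent of $\Theta$ (this is the standing setup with $m=1$), $X_i=Z_i/\Theta$, $S_n=X_1+\cdots+X_n$, and $0<\kappa<1$. Then $$TVaR_\kappa(S_n)=\frac{n}{1-\kappa}\sum_{i=1}^{n}\frac{(-1)^{i+1}}{i!}VaR_\kappa(S_n)^{i}\,f_\Theta^{\star(i-1)}\big(VaR_\kappa(S_n)\big)+\frac{n}{1-\kappa}\int_{VaR_\kappa(S_n)}^\infty f_\Theta^\star(x)\,dx.$$
   Context: $f_\Theta^{\star(k)}$ denotes the $k$-th derivative of $f_\Theta^\star$. For $0<\kappa<1$, $VaR_\kappa(S_n)=\inf\{x:F_{S_n}(x)\ge\kappa\}$ with $F_{S_n}$ the cdf of $S_n$, and $TVaR_\kappa(S_n)=E[S_n\mid S_n>VaR_\kappa(S_n)]$. *)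

theory Defs
  imports "HOL-Probability.Probability"
begin

definition VaR :: "'a measure \<Rightarrow> ('a \<Rightarrow> real) \<Rightarrow> real \<Rightarrow> real" where
  "VaR M S k = Inf {x. measure M {\<omega> \<in> space M. S \<omega> \<le> x} \<ge> k}"

definition TVaR :: "'a measure \<Rightarrow> ('a \<Rightarrow> real) \<Rightarrow> real \<Rightarrow> real" where
  "TVaR M S k =
     (LINT \<omega>|M. S \<omega> * indicator {\<omega> \<in> space M. S \<omega> > VaR M S k} \<omega>)
       / measure M {\<omega> \<in> space M. S \<omega> > VaR M S k}"

definition laplace_tr :: "'a measure \<Rightarrow> ('a \<Rightarrow> real) \<Rightarrow> real \<Rightarrow> real" where
  "laplace_tr M \<Theta> s = (LINT \<omega>|M. exp (- s * \<Theta> \<omega>))"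

end

theory Submission
  imports Defs
begin

(* Write S = W / \<Theta> with W = Z_1 + ... + Z_n, which is Erlang (Gamma(n,1)) distributed and
   independent of \<Theta>. Since y g_n(y) = n g_(n+1)(y) for the Gamma densities, conditionally on
   \<Theta> = t the stop-loss E[S; S > v] is (n/t) P(Gamma(n+1,1) > v t), an explicit finite sum of terms
   v^k t^(k-1) e^(-v t) / k! plus e^(-v t) / t. Averaging over \<Theta>, the moments
   E[\<Theta>^j e^(-v \<Theta>)] are (-1)^j times the derivatives of the Laplace transform (differentiation
   under the integral sign, dominated via t^m e^(-c t) \<le> m! / c^m), and E[e^(-v \<Theta>) / \<Theta>] is
   the integral of the Laplace transform over [v, \<infinity>) by Tonelli. Finally S has no atoms and
   no mass on (-\<infinity>, 0], so P(S > VaR) = 1 - \<kappa>. *)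

lemma power_div_fact_le_exp:
  fixes x :: real
  assumes "0 \<le> x"
  shows "x ^ m / fact m \<le> exp x"
proof -
  have series: "(\<lambda>n. x ^ n / fact n) sums exp x"
    using exp_converges[of x] by (simp add: divide_inverse_commute)
  have "(\<Sum>n\<in>{m}. x ^ n / fact n) \<le> (\<Sum>n. x ^ n / fact n)"
    by (rule sum_le_suminf) (use series assms in \<open>auto simp: sums_summable\<close>)
  then show ?thesis
    using sums_unique[OF series] by simp
qed

lemma power_mult_exp_le:
  fixes c t :: real
  assumes "0 < c" "0 \<le> t"
  shows "t ^ m * exp (- c * t) \<le> fact m / c ^ m"
proof -
  have "(c * t) ^ m / fact m \<le> exp (c * t)"
    using assms by (intro power_div_fact_le_exp) simp
  then have "c ^ m * (t ^ m * exp (- c * t)) \<le> fact m"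
    by (simp add: power_mult_distrib exp_minus field_simps)
  then show ?thesis
    using assms by (simp add: field_simps)
qed

lemma abs_exp_minus_one_minus_le:
  fixes u :: real
  shows "\<bar>exp u - 1 - u\<bar> \<le> u\<^sup>2 * exp \<bar>u\<bar>"
proof -
  obtain s where s: "\<bar>s\<bar> \<le> \<bar>u\<bar>" "exp u = (\<Sum>m<2. u ^ m / fact m) + exp s / fact 2 * u ^ 2"
    using Maclaurin_exp_le[of u 2] by blast
  then have "\<bar>exp u - 1 - u\<bar> = exp s / 2 * u\<^sup>2"
    by (simp add: numeral_2_eq_2)
  also have "\<dots> \<le> exp \<bar>u\<bar> * u\<^sup>2"
  proof (rule mult_right_mono)
    have "exp s \<le> exp \<bar>u\<bar>"
      using s(1) by (metis abs_ge_self exp_le_cancel_iff order_trans)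
    then show "exp s / 2 \<le> exp \<bar>u\<bar>"
      using exp_gt_zero[of s] by linarith
  qed simp
  finally show ?thesis
    by (simp add: mult.commute)
qed

lemma power_mult_exp_taylor_le:
  fixes t x y :: real
  assumes "0 \<le> t" "0 < x" "\<bar>y - x\<bar> \<le> x / 2"
  shows "\<bar>t ^ k * exp (- y * t) - t ^ k * exp (- x * t) + (y - x) * (t ^ Suc k * exp (- x * t))\<bar>
         \<le> (y - x)\<^sup>2 * (t ^ (k + 2) * exp (- (x / 2) * t))"
proof -
  define h where "h = y - x"
  have "t ^ k * exp (- y * t) - t ^ k * exp (- x * t) + (y - x) * (t ^ Suc k * exp (- x * t))
      = t ^ k * exp (- x * t) * (exp (- h * t) - 1 - (- h * t))"
    by (simp add: h_def algebra_simps flip: exp_add)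
  then have "\<bar>t ^ k * exp (- y * t) - t ^ k * exp (- x * t) + (y - x) * (t ^ Suc k * exp (- x * t))\<bar>
      = t ^ k * exp (- x * t) * \<bar>exp (- h * t) - 1 - (- h * t)\<bar>"
    using assms by (simp add: abs_mult)
  also have "\<dots> \<le> t ^ k * exp (- x * t) * ((h * t)\<^sup>2 * exp (x / 2 * t))"
  proof (rule mult_left_mono)
    have "\<bar>h\<bar> * t \<le> x / 2 * t"
      using assms by (intro mult_right_mono) (auto simp: h_def)
    then have "(h * t)\<^sup>2 * exp (\<bar>- h * t\<bar>) \<le> (h * t)\<^sup>2 * exp (x / 2 * t)"
      using assms by (intro mult_left_mono) (auto simp: abs_mult)
    then show "\<bar>exp (- h * t) - 1 - (- h * t)\<bar> \<le> (h * t)\<^sup>2 * exp (x / 2 * t)"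
      using abs_exp_minus_one_minus_le[of "- h * t"] by (simp add: power2_eq_square)
  qed (use assms in simp)
  also have "\<dots> = h\<^sup>2 * (t ^ (k + 2) * exp (- (x / 2) * t))"
    by (simp add: power_mult_distrib power_add power2_eq_square algebra_simps flip: exp_add)
  finally show ?thesis
    by (simp add: h_def)
qed

lemma (in prob_space) integrable_power_mult_exp:
  fixes T :: "'a \<Rightarrow> real"
  assumes "T \<in> borel_measurable M" "\<forall>\<omega>\<in>space M. 0 \<le> T \<omega>" "0 < x"
  shows "integrable M (\<lambda>\<omega>. T \<omega> ^ k * exp (- x * T \<omega>))"
proof (rule integrable_const_bound[where B = "fact k / x ^ k"])
  show "AE \<omega> in M. norm (T \<omega> ^ k * exp (- x * T \<omega>)) \<le> fact k / x ^ k"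
    using assms power_mult_exp_le[OF \<open>0 < x\<close>] by (auto intro!: AE_I2)
qed (use assms in measurable)

lemma has_real_derivative_quadratic_remainderI:
  fixes f :: "real \<Rightarrow> real"
  assumes "0 < d" and remainder: "\<And>h. \<bar>h\<bar> \<le> d \<Longrightarrow> \<bar>f (x + h) - f x - h * D\<bar> \<le> h\<^sup>2 * C"
  shows "(f has_real_derivative D) (at x)"
proof -
  have slope: "norm ((f (x + h) - f x) / h - D) \<le> \<bar>h\<bar> * C" if h: "h \<noteq> 0" "\<bar>h\<bar> \<le> d" for h
  proof -
    have "(f (x + h) - f x) / h - D = (f (x + h) - f x - h * D) / h"
      using h by (simp add: field_simps)
    then have "norm ((f (x + h) - f x) / h - D) = \<bar>f (x + h) - f x - h * D\<bar> / \<bar>h\<bar>"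
      by (simp add: abs_divide)
    also have "\<dots> \<le> \<bar>h\<bar> * C"
      using remainder[OF h(2)] h(1) by (simp add: pos_divide_le_eq power2_eq_square mult_ac)
    finally show ?thesis .
  qed
  have "((\<lambda>h. (f (x + h) - f x) / h - D) \<longlongrightarrow> 0) (at 0)"
  proof (rule Lim_null_comparison)
    show "\<forall>\<^sub>F h in at 0. norm ((f (x + h) - f x) / h - D) \<le> \<bar>h\<bar> * C"
      unfolding eventually_at using \<open>0 < d\<close> slope
      by (intro exI[of _ d]) (auto simp: dist_real_def)
    show "((\<lambda>h. \<bar>h\<bar> * C) \<longlongrightarrow> 0) (at 0)"
      by (auto intro!: tendsto_eq_intros)
  qed
  then show ?thesis
    unfolding DERIV_def by (simp add: LIM_zero_iff)
qed

lemma (in prob_space) has_real_derivative_power_mult_exp_moment: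
  fixes T :: "'a \<Rightarrow> real"
  assumes T: "T \<in> borel_measurable M" and nonneg: "\<forall>\<omega>\<in>space M. 0 \<le> T \<omega>" and x: "0 < x"
  shows "((\<lambda>s. LINT \<omega>|M. T \<omega> ^ k * exp (- s * T \<omega>)) has_real_derivative
           - (LINT \<omega>|M. T \<omega> ^ Suc k * exp (- x * T \<omega>))) (at x)"
proof (rule has_real_derivative_quadratic_remainderI)
  let ?C = "fact (k + 2) / (x / 2) ^ (k + 2)"
  let ?g = "\<lambda>h \<omega>. T \<omega> ^ k * exp (- (x + h) * T \<omega>) - T \<omega> ^ k * exp (- x * T \<omega>)
      + h * (T \<omega> ^ Suc k * exp (- x * T \<omega>))"
  fix h :: real assume h: "\<bar>h\<bar> \<le> x / 2"
  then have "0 < x + h"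
    using x by linarith
  note integrables = integrable_power_mult_exp[OF T nonneg this, of k]
    integrable_power_mult_exp[OF T nonneg x, of k] integrable_power_mult_exp[OF T nonneg x, of "Suc k"]
  have "\<bar>?g h \<omega>\<bar> \<le> h\<^sup>2 * ?C" if "\<omega> \<in> space M" for \<omega>
  proof -
    have t: "0 \<le> T \<omega>"
      using nonneg that by auto
    have "\<bar>?g h \<omega>\<bar> \<le> h\<^sup>2 * (T \<omega> ^ (k + 2) * exp (- (x / 2) * T \<omega>))"
      using power_mult_exp_taylor_le[OF t x, of "x + h" k] h by simp
    also have "\<dots> \<le> h\<^sup>2 * ?C"
      using x t by (intro mult_left_mono power_mult_exp_le) auto
    finally show ?thesis .
  qed
  then have "\<bar>LINT \<omega>|M. ?g h \<omega>\<bar> \<le> h\<^sup>2 * ?C"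
    using integrables by (intro order_trans[OF integral_abs_bound integral_le_const]) auto
  then show "\<bar>(LINT \<omega>|M. T \<omega> ^ k * exp (- (x + h) * T \<omega>)) - (LINT \<omega>|M. T \<omega> ^ k * exp (- x * T \<omega>))
      - h * - (LINT \<omega>|M. T \<omega> ^ Suc k * exp (- x * T \<omega>))\<bar> \<le> h\<^sup>2 * ?C"
    using integrables by simp
qed (use x in simp)

lemma (in prob_space) higher_deriv_laplace_tr:
  fixes T :: "'a \<Rightarrow> real"
  assumes T: "T \<in> borel_measurable M" and nonneg: "\<forall>\<omega>\<in>space M. 0 \<le> T \<omega>" and "0 < x"
  shows "(deriv ^^ k) (laplace_tr M T) x = (-1) ^ k * (LINT \<omega>|M. T \<omega> ^ k * exp (- x * T \<omega>))"
  using \<open>0 < x\<close>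
proof (induction k arbitrary: x)
  case 0
  then show ?case
    by (simp add: laplace_tr_def)
next
  case (Suc k)
  have "\<forall>\<^sub>F y in nhds x. (deriv ^^ k) (laplace_tr M T) y
      = (-1) ^ k * (LINT \<omega>|M. T \<omega> ^ k * exp (- y * T \<omega>))"
    using eventually_nhds_in_open[of "{0<..}" x] Suc by (auto elim!: eventually_mono)
  then have "(deriv ^^ Suc k) (laplace_tr M T) x
      = deriv (\<lambda>y. (-1) ^ k * (LINT \<omega>|M. T \<omega> ^ k * exp (- y * T \<omega>))) x"
    by (simp add: deriv_cong_ev)
  also have "\<dots> = (-1) ^ k * - (LINT \<omega>|M. T \<omega> ^ Suc k * exp (- x * T \<omega>))"
    by (intro DERIV_imp_deriv DERIV_cmult has_real_derivative_power_mult_exp_moment T nonneg Suc.prems)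
  finally show ?case
    by simp
qed

lemma nn_integral_exp_tail:
  fixes t a :: real
  assumes "0 < t"
  shows "(\<integral>\<^sup>+x. ennreal (exp (- x * t)) * indicator {a..} x \<partial>lborel) = ennreal (exp (- a * t) / t)"
proof -
  have "filterlim (\<lambda>x. t * x) at_top at_top"
    by (rule filterlim_tendsto_pos_mult_at_top[OF tendsto_const assms filterlim_ident])
  then have "filterlim (\<lambda>x. - x * t) at_bot at_top"
    by (simp add: filterlim_uminus_at_top mult.commute)
  then have "((\<lambda>x. exp (- x * t)) \<longlongrightarrow> 0) at_top"
    by (rule filterlim_compose[OF exp_at_bot])
  then have "((\<lambda>x. - exp (- x * t) / t) \<longlongrightarrow> 0) at_top"
    using tendsto_divide[OF tendsto_minus tendsto_const, of _ 0 at_top t] assms by simp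
  then have "(\<integral>\<^sup>+x. ennreal (exp (- x * t)) * indicator {a..} x \<partial>lborel) = ennreal (0 - (- exp (- a * t) / t))"
    using assms by (intro nn_integral_FTC_atLeast) (auto intro!: derivative_eq_intros simp: field_simps)
  then show ?thesis
    by simp
qed

lemma (in prob_space) laplace_tr_tail_integral:
  fixes T :: "'a \<Rightarrow> real"
  assumes T[measurable]: "T \<in> borel_measurable M" and pos: "\<forall>\<omega>\<in>space M. 0 < T \<omega>"
    and "0 < v" and L: "set_integrable lborel {v..} (laplace_tr M T)"
  shows "integrable M (\<lambda>\<omega>. exp (- v * T \<omega>) / T \<omega>)"
    and "(LINT \<omega>|M. exp (- v * T \<omega>) / T \<omega>) = (LBINT x:{v..}. laplace_tr M T x)"
proof -
  interpret pair_sigma_finite M lborel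
    by (rule pair_sigma_finite.intro) unfold_locales
  have nonneg: "0 \<le> laplace_tr M T x" for x
    unfolding laplace_tr_def by (rule integral_nonneg_AE) simp
  have "(\<integral>\<^sup>+\<omega>. ennreal (exp (- v * T \<omega>) / T \<omega>) \<partial>M)
      = (\<integral>\<^sup>+\<omega>. (\<integral>\<^sup>+x. ennreal (exp (- x * T \<omega>)) * indicator {v..} x \<partial>lborel) \<partial>M)"
    by (rule nn_integral_cong) (use pos nn_integral_exp_tail in auto)
  also have "\<dots> = (\<integral>\<^sup>+x. (\<integral>\<^sup>+\<omega>. ennreal (exp (- x * T \<omega>)) * indicator {v..} x \<partial>M) \<partial>lborel)"
    by (rule Fubini'[symmetric]) measurable
  also have "\<dots> = (\<integral>\<^sup>+x. ennreal (laplace_tr M T x * indicator {v..} x) \<partial>lborel)"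
  proof (rule nn_integral_cong)
    fix x :: real
    show "(\<integral>\<^sup>+\<omega>. ennreal (exp (- x * T \<omega>)) * indicator {v..} x \<partial>M)
        = ennreal (laplace_tr M T x * indicator {v..} x)"
    proof (cases "v \<le> x")
      case True
      then have "integrable M (\<lambda>\<omega>. exp (- x * T \<omega>))"
        using integrable_power_mult_exp[OF T _, of x 0] pos \<open>0 < v\<close> by (simp add: less_imp_le)
      then show ?thesis
        using True unfolding laplace_tr_def by (simp add: nn_integral_eq_integral)
    qed simp
  qed
  also have "\<dots> = ennreal (LBINT x:{v..}. laplace_tr M T x)"
    using L nonneg unfolding set_integrable_def set_lebesgue_integral_def
    by (subst nn_integral_eq_integral) (auto simp: mult.commute)
  finally have nn: "(\<integral>\<^sup>+\<omega>. ennreal (exp (- v * T \<omega>) / T \<omega>) \<partial>M) = ennreal (LBINT x:{v..}. laplace_tr M T x)" .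
  have "0 \<le> (LBINT x:{v..}. laplace_tr M T x)"
    using nonneg unfolding set_lebesgue_integral_def by (intro integral_nonneg_AE) simp
  with nn pos show "integrable M (\<lambda>\<omega>. exp (- v * T \<omega>) / T \<omega>)"
    and "(LINT \<omega>|M. exp (- v * T \<omega>) / T \<omega>) = (LBINT x:{v..}. laplace_tr M T x)"
    using nn_integral_eq_integrable[of "\<lambda>\<omega>. exp (- v * T \<omega>) / T \<omega>" M]
    by (auto intro!: AE_I2 simp: less_imp_le)
qed

lemma (in prob_space) nn_integral_indep_var_density:
  fixes X Y :: "'a \<Rightarrow> real"
  assumes indep: "indep_var borel X borel Y" and Y: "distributed M lborel Y g"
    and G[measurable]: "G \<in> borel_measurable (borel \<Otimes>\<^sub>M borel)"
  shows "(\<integral>\<^sup>+\<omega>. G (X \<omega>, Y \<omega>) \<partial>M) = (\<integral>\<^sup>+\<omega>. (\<integral>\<^sup>+y. g y * G (X \<omega>, y) \<partial>lborel) \<partial>M)"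
proof -
  have [measurable]: "X \<in> borel_measurable M" "Y \<in> borel_measurable M"
    and joint: "distr M borel X \<Otimes>\<^sub>M distr M borel Y = distr M (borel \<Otimes>\<^sub>M borel) (\<lambda>\<omega>. (X \<omega>, Y \<omega>))"
    using indep unfolding indep_var_distribution_eq by auto
  interpret PY: prob_space "distr M borel Y"
    by (rule prob_space_distr) simp
  have [measurable]: "g \<in> borel_measurable borel"
    using Y by (auto simp: distributed_def)
  have density: "distr M borel Y = density lborel g"
    using Y distr_cong[of M M borel lborel Y Y] by (simp add: distributed_def)
  have "(\<integral>\<^sup>+\<omega>. G (X \<omega>, Y \<omega>) \<partial>M) = (\<integral>\<^sup>+p. G p \<partial>(distr M borel X \<Otimes>\<^sub>M distr M borel Y))"
    unfolding joint by (simp add: nn_integral_distr)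
  also have "\<dots> = (\<integral>\<^sup>+x. (\<integral>\<^sup>+y. G (x, y) \<partial>distr M borel Y) \<partial>distr M borel X)"
    by (rule PY.nn_integral_fst[symmetric]) simp
  also have "\<dots> = (\<integral>\<^sup>+\<omega>. (\<integral>\<^sup>+y. g y * G (X \<omega>, y) \<partial>lborel) \<partial>M)"
    unfolding density by (simp add: nn_integral_distr nn_integral_density)
  finally show ?thesis .
qed

lemma (in prob_space) prob_ratio_eq_zero:
  fixes T W :: "'a \<Rightarrow> real"
  assumes indep: "indep_var borel T borel W" and W: "distributed M lborel W g"
    and pos: "\<forall>\<omega>\<in>space M. 0 < T \<omega>"
  shows "prob {\<omega>\<in>space M. W \<omega> / T \<omega> = x} = 0"
proof -
  have [measurable]: "T \<in> borel_measurable M" "W \<in> borel_measurable M"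
    using indep unfolding indep_var_distribution_eq by auto
  let ?G = "\<lambda>p :: real \<times> real. if snd p = x * fst p then 1 else 0 :: ennreal"
  have "emeasure M {\<omega>\<in>space M. W \<omega> / T \<omega> = x} = (\<integral>\<^sup>+\<omega>. indicator {\<omega>\<in>space M. W \<omega> / T \<omega> = x} \<omega> \<partial>M)"
    by (subst nn_integral_indicator) auto
  also have "\<dots> = (\<integral>\<^sup>+\<omega>. ?G (T \<omega>, W \<omega>) \<partial>M)"
    using pos by (intro nn_integral_cong) (auto simp: field_simps indicator_def)
  also have "\<dots> = (\<integral>\<^sup>+\<omega>. (\<integral>\<^sup>+y. g y * ?G (T \<omega>, y) \<partial>lborel) \<partial>M)"
    by (rule nn_integral_indep_var_density[OF indep W]) measurable
  also have "\<dots> = 0"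
  proof (rule nn_integral_zero', rule AE_I2)
    fix \<omega> assume "\<omega> \<in> space M"
    show "(\<integral>\<^sup>+y. g y * ?G (T \<omega>, y) \<partial>lborel) = 0"
    proof (rule nn_integral_zero')
      show "AE y in lborel. g y * ?G (T \<omega>, y) = 0"
        using AE_lborel_singleton[of "x * T \<omega>"] by eventually_elim simp
    qed
  qed
  finally show ?thesis
    by (simp add: measure_def)
qed

lemma erlang_density_mult_self:
  assumes "0 < l"
  shows "erlang_density k l y * y = real (Suc k) / l * erlang_density (Suc k) l y"
proof -
  have "fact (Suc k) = real (Suc k) * (fact k :: real)"
    by simp
  then show ?thesis
    using assms by (simp add: erlang_density_def field_simps del: of_nat_Suc fact_Suc)
qed

lemma emeasure_erlang_density_greaterThan:
  assumes "0 < l"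
  shows "emeasure (density lborel (erlang_density k l)) {c<..} = ennreal (1 - erlang_CDF k l c)"
proof -
  interpret prob_space "density lborel (erlang_density k l)"
    using assms by (rule prob_space_erlang_density)
  have "measure (density lborel (erlang_density k l)) {..c} = erlang_CDF k l c"
    using emeasure_erlang_density[OF assms, of k c] erlang_CDF_nonneg[OF assms]
    by (simp add: emeasure_eq_measure)
  moreover have "{c<..} = space (density lborel (erlang_density k l)) - {..c}"
    by auto
  ultimately show ?thesis
    using prob_compl[of "{..c}"] by (simp add: emeasure_eq_measure)
qed

lemma erlang_tail_div_eq:
  fixes t v :: real
  assumes "0 < t" "0 \<le> v"
  shows "(1 - erlang_CDF n 1 (v * t)) / t
       = exp (- v * t) / t + (\<Sum>k=1..n. v ^ k / fact k * (t ^ (k - 1) * exp (- v * t)))"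
proof -
  have "\<not> v * t < 0"
    using assms by (simp add: not_less)
  then have "1 - erlang_CDF n 1 (v * t) = (\<Sum>k\<le>n. (v * t) ^ k * exp (- v * t) / fact k)"
    by (simp add: erlang_CDF_def)
  also have "\<dots> = exp (- v * t) + (\<Sum>k=1..n. (v * t) ^ k * exp (- v * t) / fact k)"
    by (simp add: atMost_atLeast0 sum.atLeast_Suc_atMost)
  also have "(\<Sum>k=1..n. (v * t) ^ k * exp (- v * t) / fact k)
      = t * (\<Sum>k=1..n. v ^ k / fact k * (t ^ (k - 1) * exp (- v * t)))"
    unfolding sum_distrib_left
  proof (rule sum.cong)
    fix k assume "k \<in> {1..n}"
    then have "t ^ k = t * t ^ (k - 1)"
      by (simp flip: power_Suc)
    then show "(v * t) ^ k * exp (- v * t) / fact k = t * (v ^ k / fact k * (t ^ (k - 1) * exp (- v * t)))"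
      by (simp add: power_mult_distrib)
  qed simp
  finally show ?thesis
    using assms by (simp add: field_simps)
qed

lemma nn_integral_erlang_ratio_tail:
  fixes t v :: real
  assumes "0 < t" "0 < v" "1 \<le> n"
  shows "(\<integral>\<^sup>+y. ennreal (erlang_density (n - 1) 1 y) * ennreal (y / t * indicator {v<..} (y / t)) \<partial>lborel)
       = ennreal (real n * (exp (- v * t) / t + (\<Sum>k=1..n. v ^ k / fact k * (t ^ (k - 1) * exp (- v * t)))))"
proof -
  have Suc: "Suc (n - 1) = n"
    using assms by simp
  have "erlang_density (n - 1) 1 y * (y / t * indicator {v<..} (y / t))
      = real n / t * (erlang_density n 1 y * indicator {v * t<..} y)" for y
    using erlang_density_mult_self[of 1 "n - 1" y] assms
    by (simp add: Suc field_simps indicator_def)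
  then have "ennreal (erlang_density (n - 1) 1 y) * ennreal (y / t * indicator {v<..} (y / t))
      = ennreal (real n / t) * (ennreal (erlang_density n 1 y) * indicator {v * t<..} y)" for y
    using assms by (cases "v * t < y") (simp_all add: indicator_def flip: ennreal_mult')
  then have "(\<integral>\<^sup>+y. ennreal (erlang_density (n - 1) 1 y) * ennreal (y / t * indicator {v<..} (y / t)) \<partial>lborel)
      = ennreal (real n / t) * emeasure (density lborel (erlang_density n 1)) {v * t<..}"
    by (simp add: nn_integral_cmult emeasure_density)
  also have "\<dots> = ennreal (real n * ((1 - erlang_CDF n 1 (v * t)) / t))"
    using assms by (simp add: emeasure_erlang_density_greaterThan flip: ennreal_mult')
  finally show ?thesis
    using assms by (simp add: erlang_tail_div_eq)
qed

lemma (in prob_space) integral_ratio_tail_erlang_mixture: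
  fixes T W :: "'a \<Rightarrow> real"
  assumes W: "distributed M lborel W (erlang_density (n - 1) 1)" and n: "1 \<le> n"
    and indep: "indep_var borel T borel W" and pos: "\<forall>\<omega>\<in>space M. 0 < T \<omega>" and v: "0 < v"
    and tail: "integrable M (\<lambda>\<omega>. exp (- v * T \<omega>) / T \<omega>)"
  shows "(LINT \<omega>|M. W \<omega> / T \<omega> * indicator {\<omega>\<in>space M. v < W \<omega> / T \<omega>} \<omega>)
       = real n * ((LINT \<omega>|M. exp (- v * T \<omega>) / T \<omega>)
           + (\<Sum>k=1..n. v ^ k / fact k * (LINT \<omega>|M. T \<omega> ^ (k - 1) * exp (- v * T \<omega>))))"
proof -
  have T[measurable]: "T \<in> borel_measurable M" and [measurable]: "W \<in> borel_measurable M"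
    using indep unfolding indep_var_distribution_eq by auto
  define h where "h t = real n * (exp (- v * t) / t + (\<Sum>k=1..n. v ^ k / fact k * (t ^ (k - 1) * exp (- v * t))))"
    for t
  have moments: "integrable M (\<lambda>\<omega>. T \<omega> ^ j * exp (- v * T \<omega>))" for j
    using integrable_power_mult_exp[OF T _ v] pos by (simp add: less_imp_le)
  have h_int: "integrable M (\<lambda>\<omega>. h (T \<omega>))"
    unfolding h_def using tail moments by (intro integrable_mult_right integrable_add integrable_sum) auto
  have h_nonneg: "0 \<le> h (T \<omega>)" if "\<omega> \<in> space M" for \<omega>
    unfolding h_def using pos that v
    by (intro mult_nonneg_nonneg add_nonneg_nonneg sum_nonneg divide_nonneg_nonneg) auto
  let ?G = "\<lambda>p :: real \<times> real. ennreal (snd p / fst p * indicator {v<..} (snd p / fst p))"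
  have "(\<integral>\<^sup>+\<omega>. ennreal (W \<omega> / T \<omega> * indicator {\<omega>\<in>space M. v < W \<omega> / T \<omega>} \<omega>) \<partial>M)
      = (\<integral>\<^sup>+\<omega>. ?G (T \<omega>, W \<omega>) \<partial>M)"
    by (intro nn_integral_cong) (simp add: indicator_def)
  also have "\<dots> = (\<integral>\<^sup>+\<omega>. (\<integral>\<^sup>+y. ennreal (erlang_density (n - 1) 1 y) * ?G (T \<omega>, y) \<partial>lborel) \<partial>M)"
    by (rule nn_integral_indep_var_density[OF indep W]) measurable
  also have "\<dots> = (\<integral>\<^sup>+\<omega>. ennreal (h (T \<omega>)) \<partial>M)"
  proof (rule nn_integral_cong)
    fix \<omega> assume "\<omega> \<in> space M"
    then show "(\<integral>\<^sup>+y. ennreal (erlang_density (n - 1) 1 y) * ?G (T \<omega>, y) \<partial>lborel) = ennreal (h (T \<omega>))"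
      using nn_integral_erlang_ratio_tail[of "T \<omega>" v n] pos v n unfolding h_def prod.sel by simp
  qed
  also have "\<dots> = ennreal (LINT \<omega>|M. h (T \<omega>))"
    using h_int h_nonneg by (intro nn_integral_eq_integral) auto
  finally have "(LINT \<omega>|M. W \<omega> / T \<omega> * indicator {\<omega>\<in>space M. v < W \<omega> / T \<omega>} \<omega>) = (LINT \<omega>|M. h (T \<omega>))"
    using nn_integral_eq_integrable[of "\<lambda>\<omega>. W \<omega> / T \<omega> * indicator {\<omega>\<in>space M. v < W \<omega> / T \<omega>} \<omega>"]
      integral_nonneg_AE[of "\<lambda>\<omega>. h (T \<omega>)" M] h_nonneg v
    by (auto simp: indicator_def)
  also have "\<dots> = real n * ((LINT \<omega>|M. exp (- v * T \<omega>) / T \<omega>)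
           + (\<Sum>k=1..n. v ^ k / fact k * (LINT \<omega>|M. T \<omega> ^ (k - 1) * exp (- v * T \<omega>))))"
    unfolding h_def using tail moments by (simp add: integral_sum)
  finally show ?thesis .
qed

lemma continuous_mono_Inf_superlevel:
  fixes F :: "real \<Rightarrow> real"
  assumes mono: "mono F" and cont: "\<And>x. isCont F x" and lim: "(F \<longlongrightarrow> 1) at_top"
    and F0: "F 0 = 0" and \<kappa>: "0 < \<kappa>" "\<kappa> < 1"
  shows "0 < Inf {x. \<kappa> \<le> F x}" and "F (Inf {x. \<kappa> \<le> F x}) = \<kappa>"
proof -
  define A where "A = {x. \<kappa> \<le> F x}"
  obtain x0 where "\<kappa> < F x0"
    using eventually_happens'[OF _ order_tendstoD(1)[OF lim \<kappa>(2)]] by auto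
  then have ne: "A \<noteq> {}"
    unfolding A_def by (auto intro!: exI[of _ x0])
  have pos: "0 < x" if "x \<in> A" for x
    using that \<kappa> F0 monoD[OF mono, of x 0] unfolding A_def by force
  then have bdd: "bdd_below A"
    by (meson bdd_below.I less_imp_le)
  have "closed A"
    unfolding A_def using cont by (intro closed_Collect_le continuous_intros continuous_at_imp_continuous_on) auto
  then have inA: "Inf A \<in> A"
    using ne bdd by (intro closed_contains_Inf)
  have "F (Inf A) \<le> \<kappa>"
  proof (rule tendsto_upperbound)
    show "(F \<longlongrightarrow> F (Inf A)) (at_left (Inf A))"
      using cont[of "Inf A"] by (simp add: isCont_def filterlim_at_split)
    have "F y \<le> \<kappa>" if "y < Inf A" for y
      using cInf_lower[OF _ bdd, of y] that unfolding A_def by force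
    then show "\<forall>\<^sub>F y in at_left (Inf A). F y \<le> \<kappa>"
      by (auto simp: eventually_at_filter intro!: always_eventually)
  qed simp
  with inA pos show "0 < Inf {x. \<kappa> \<le> F x}" "F (Inf {x. \<kappa> \<le> F x}) = \<kappa>"
    unfolding A_def by auto
qed

lemma (in prob_space) VaR_atomless:
  fixes S :: "'a \<Rightarrow> real"
  assumes [measurable]: "S \<in> borel_measurable M"
    and atomless: "\<And>x. prob {\<omega>\<in>space M. S \<omega> = x} = 0"
    and nonpos: "prob {\<omega>\<in>space M. S \<omega> \<le> 0} = 0" and \<kappa>: "0 < \<kappa>" "\<kappa> < 1"
  shows "0 < VaR M S \<kappa>" and "prob {\<omega>\<in>space M. VaR M S \<kappa> < S \<omega>} = 1 - \<kappa>"
proof -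
  interpret D: real_distribution "distr M borel S"
    by simp
  define F where "F x = prob {\<omega>\<in>space M. S \<omega> \<le> x}" for x
  have F_cdf: "F = cdf (distr M borel S)"
    unfolding F_def by (auto simp: cdf_def measure_distr intro!: arg_cong[where f = prob])
  have "measure (distr M borel S) {x} = 0" for x
    using atomless[of x] by (simp add: measure_distr vimage_def Int_def conj_commute)
  then have cont: "isCont F x" for x
    unfolding F_cdf by (simp add: D.isCont_cdf)
  have mono: "mono F"
    unfolding F_cdf by (auto intro: monoI D.cdf_nondecreasing)
  have lim: "(F \<longlongrightarrow> 1) at_top"
    unfolding F_cdf by (rule D.cdf_lim_at_top_prob)
  have "F 0 = 0"
    using nonpos unfolding F_def .
  note superlevel = continuous_mono_Inf_superlevel[OF mono cont lim this \<kappa>]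
  moreover have "VaR M S \<kappa> = Inf {x. \<kappa> \<le> F x}"
    unfolding VaR_def F_def ..
  moreover have "prob {\<omega>\<in>space M. c < S \<omega>} = 1 - F c" for c
  proof -
    have "{\<omega>\<in>space M. c < S \<omega>} = space M - {\<omega>\<in>space M. S \<omega> \<le> c}"
      by auto
    then show ?thesis
      unfolding F_def by (simp add: prob_compl)
  qed
  ultimately show "0 < VaR M S \<kappa>" "prob {\<omega>\<in>space M. VaR M S \<kappa> < S \<omega>} = 1 - \<kappa>"
    using superlevel by auto
qed

lemma (in prob_space) sum_exponentials_indep_erlang:
  fixes T :: "'a \<Rightarrow> real" and Z :: "nat \<Rightarrow> 'a \<Rightarrow> real"
  assumes Z: "\<And>i. i \<in> {1..n} \<Longrightarrow> distributed M lborel (Z i) (exponential_density 1)"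
    and indep: "indep_vars (\<lambda>_. borel) (\<lambda>i. if i = 0 then T else Z i) {0..n}" and n: "1 \<le> n"
  shows "indep_var borel T borel (\<lambda>\<omega>. \<Sum>i=1..n. Z i \<omega>)"
    and "distributed M lborel (\<lambda>\<omega>. \<Sum>i=1..n. Z i \<omega>) (erlang_density (n - 1) 1)"
proof -
  define Y where "Y = (\<lambda>i. if i = 0 then T else Z i)"
  have "{0..n} = insert 0 {1..n}"
    by auto
  then have "indep_var borel (Y 0) borel (\<lambda>\<omega>. \<Sum>i=1..n. Y i \<omega>)"
    using indep unfolding Y_def by (intro indep_vars_sum) auto
  moreover have "(\<lambda>\<omega>. \<Sum>i=1..n. Y i \<omega>) = (\<lambda>\<omega>. \<Sum>i=1..n. Z i \<omega>)"
    unfolding Y_def by (auto intro!: sum.cong)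
  ultimately show "indep_var borel T borel (\<lambda>\<omega>. \<Sum>i=1..n. Z i \<omega>)"
    by (simp add: Y_def)
  have "indep_vars (\<lambda>_. borel) Y {1..n}"
    using indep unfolding Y_def by (rule indep_vars_subset) auto
  then have "indep_vars (\<lambda>_. borel) Z {1..n}"
    by (rule indep_vars_cong[THEN iffD1, rotated 3]) (auto simp: Y_def)
  then show "distributed M lborel (\<lambda>\<omega>. \<Sum>i=1..n. Z i \<omega>) (erlang_density (n - 1) 1)"
    using exponential_distributed_sum[of "{1..n}" 1 Z] Z n by simp
qed

theorem (in prob_space) TVaR_erlang_mixture:
  fixes T W :: "'a \<Rightarrow> real"
  assumes W: "distributed M lborel W (erlang_density (n - 1) 1)" and n: "1 \<le> n"
    and indep: "indep_var borel T borel W" and pos: "\<forall>\<omega>\<in>space M. 0 < T \<omega>"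
    and L: "set_integrable lborel {0..} (laplace_tr M T)" and \<kappa>: "0 < \<kappa>" "\<kappa> < 1"
  defines "v \<equiv> VaR M (\<lambda>\<omega>. W \<omega> / T \<omega>) \<kappa>"
  shows "TVaR M (\<lambda>\<omega>. W \<omega> / T \<omega>) \<kappa> =
           real n / (1 - \<kappa>) * (\<Sum>i=1..n. (-1) ^ (i + 1) / fact i * v ^ i * (deriv ^^ (i - 1)) (laplace_tr M T) v)
         + real n / (1 - \<kappa>) * (LBINT x:{v..}. laplace_tr M T x)"
proof -
  have T[measurable]: "T \<in> borel_measurable M" and [measurable]: "W \<in> borel_measurable M"
    using indep unfolding indep_var_distribution_eq by auto
  have "{\<omega>\<in>space M. W \<omega> / T \<omega> \<le> 0} = {\<omega>\<in>space M. W \<omega> \<le> 0}"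
    using pos by (auto simp: divide_le_0_iff less_imp_le)
  then have "prob {\<omega>\<in>space M. W \<omega> / T \<omega> \<le> 0} = 0"
    using erlang_distributed_le[OF W, of 0] by (simp add: erlang_CDF_at0)
  note VaR = VaR_atomless[OF _ prob_ratio_eq_zero[OF indep W pos] this \<kappa>, folded v_def]
  then have v: "0 < v"
    by simp
  have "set_integrable lborel {v..} (laplace_tr M T)"
    using v by (intro set_integrable_subset[OF L]) auto
  note tail = laplace_tr_tail_integral[OF T pos v this]
  have derivs: "(\<Sum>i=1..n. (-1) ^ (i + 1) / fact i * v ^ i * (deriv ^^ (i - 1)) (laplace_tr M T) v)
      = (\<Sum>i=1..n. v ^ i / fact i * (LINT \<omega>|M. T \<omega> ^ (i - 1) * exp (- v * T \<omega>)))"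
  proof (rule sum.cong)
    fix i assume "i \<in> {1..n}"
    then obtain j where "i = Suc j"
      by (cases i) auto
    then show "(-1) ^ (i + 1) / fact i * v ^ i * (deriv ^^ (i - 1)) (laplace_tr M T) v
        = v ^ i / fact i * (LINT \<omega>|M. T \<omega> ^ (i - 1) * exp (- v * T \<omega>))"
      using higher_deriv_laplace_tr[OF T _ v, of j] pos by (simp add: less_imp_le)
  qed simp
  have "TVaR M (\<lambda>\<omega>. W \<omega> / T \<omega>) \<kappa>
      = (LINT \<omega>|M. W \<omega> / T \<omega> * indicator {\<omega>\<in>space M. v < W \<omega> / T \<omega>} \<omega>) / (1 - \<kappa>)"
    using VaR(2) by (simp add: TVaR_def v_def)
  also have "\<dots> = real n * ((LBINT x:{v..}. laplace_tr M T x)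
      + (\<Sum>i=1..n. v ^ i / fact i * (LINT \<omega>|M. T \<omega> ^ (i - 1) * exp (- v * T \<omega>)))) / (1 - \<kappa>)"
    using integral_ratio_tail_erlang_mixture[OF W n indep pos v tail(1)] tail(2) by simp
  finally show ?thesis
    unfolding derivs by (simp add: distrib_left add_divide_distrib)
qed

theorem corollary3:
  fixes M :: "'a measure" and \<Theta> :: "'a \<Rightarrow> real" and Z :: "nat \<Rightarrow> 'a \<Rightarrow> real"
    and n :: nat and \<kappa> :: real
  assumes "prob_space M"
    and "n \<ge> 2"
    and "\<forall>\<omega>\<in>space M. \<Theta> \<omega> > 0"
    and "\<exists>f. distributed M lborel \<Theta> f"
    and "set_integrable lborel {0..} (laplace_tr M \<Theta>)"
    and "\<And>i. i \<in> {1..n} \<Longrightarrow>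
           distributed M lborel (Z i) (\<lambda>x. ennreal (exponential_density 1 x))"
    and "prob_space.indep_vars M (\<lambda>_. borel) (\<lambda>i. if i = 0 then \<Theta> else Z i) {0..n}"
    and "0 < \<kappa>" and "\<kappa> < 1"
  shows "let S = (\<lambda>\<omega>. \<Sum>i=1..n. Z i \<omega> / \<Theta> \<omega>);
             v = VaR M S \<kappa>;
             L = laplace_tr M \<Theta>
         in TVaR M S \<kappa> =
              real n / (1 - \<kappa>) *
                (\<Sum>i=1..n. (-1) ^ (i + 1) / fact i * v ^ i * (deriv ^^ (i - 1)) L v)
            + real n / (1 - \<kappa>) * (LBINT x:{v..}. L x)"
proof -
  interpret prob_space M
    by fact
  define W where "W = (\<lambda>\<omega>. \<Sum>i=1..n. Z i \<omega>)"
  have n: "1 \<le> n"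
    using assms(2) by simp
  note W_facts = sum_exponentials_indep_erlang[OF assms(6) assms(7) n, folded W_def]
  have "(\<lambda>\<omega>. \<Sum>i=1..n. Z i \<omega> / \<Theta> \<omega>) = (\<lambda>\<omega>. W \<omega> / \<Theta> \<omega>)"
    by (simp add: W_def sum_divide_distrib)
  then show ?thesis
    using TVaR_erlang_mixture[OF W_facts(2) n W_facts(1) assms(3,5,8,9)] by (simp add: Let_def)
qed

end
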